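(* Let $\alpha\ne0$, let $\mathbf L$ be a solution of the difference operator formalism of the cmKP hierarchy with gauge parameter $\alpha$, and let $\varphi(s,t)$ be a function for which there is a difference operator $\hat{\mathbf W}=e^{-\alpha\varphi(s,t)}+\sum_{j\ge1}w_j(s,t)e^{-j\partial_s}$ with $\mathbf L=\hat{\mathbf W}e^{\partial_s}\hat{\mathbf W}^{-1}$ and $\partial_{t_n}\hat{\mathbf W}=\mathbf B^c_n\hat{\mathbf W}$ ($n\ge1$). Then for any $\beta$ (including $\beta=0$), the difference operator $\tilde{\mathbf L}:=e^{(\alpha-\beta)\varphi(s,t)}\mathbf L\,e^{-(\alpha-\beta)\varphi(s,t)}$ satisfies $\partial_{t_n}\tilde{\mathbf L}=[\tilde{\mathbf B}_n,\tilde{\mathbf L}]$ with $\tilde{\mathbf B}_n:=(\tilde{\mathbf L}^n)_{\ge0}-\beta(\tilde{\mathbf L}^n)_0$, i.e. it is a solution with gauge parameter $\beta$.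
   Context: Let $s\in\mathbb Z$ and $t=(t_1,t_2,\dots)$ continuous. $e^{k\partial_s}$ denotes the shift $(e^{k\partial_s}f)(s)=f(s+k)$. Difference operators are formal sums $A=\sum_ja_j(s,t)e^{j\partial_s}$; $A_{\ge0}=\sum_{j\ge0}a_je^{j\partial_s}$, $A_0=a_0$, $A_{<0}=\sum_{j<0}a_je^{j\partial_s}$. Let $\mathbf L=\sum_{j\ge0}b_j(s,t)e^{(1-j)\partial_s}$ with $b_0$ nowhere zero. For a parameter $\alpha$, the difference operator formalism of the cmKP hierarchy with gauge parameter $\alpha$ is $\partial\mathbf L/\partial t_n=[\mathbf B_n,\mathbf L]$, $n\ge1$, where $\mathbf B_n:=(\mathbf L^n)_{\ge0}-\alpha(\mathbf L^n)_0$; $\mathbf B^c_n:=\mathbf B_n-\mathbf L^n=-(\mathbf L^n)_{<0}-\alpha(\mathbf L^n)_0$. *)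

theory Defs
  imports "HOL-Analysis.Analysis"
begin

text \<open>A difference operator A = sum_j a_j(s,t) e^{j d_s} is represented by its coefficient
  function: A j s t = a_j(s,t), with s an integer and t = (t_1, t_2, ...) a real sequence
  (t n is the time t_n; only n >= 1 is used).\<close>

type_synonym dop = "int \<Rightarrow> int \<Rightarrow> (nat \<Rightarrow> real) \<Rightarrow> complex"

definition dop_bounded :: "dop \<Rightarrow> bool" where
  "dop_bounded A \<longleftrightarrow> (\<exists>N. \<forall>j>N. \<forall>s t. A j s t = 0)"

text \<open>Product: (a_i e^{i d})(b_k e^{k d}) = a_i(s) b_k(s+i) e^{(i+k) d}. For operators whose
  shift degrees are bounded above, the sum below ranges over a finite set.\<close>
definition dmul :: "dop \<Rightarrow> dop \<Rightarrow> dop" where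
  "dmul A B = (\<lambda>m s t. \<Sum>i | A i s t \<noteq> 0 \<and> B (m - i) (s + i) t \<noteq> 0.
                          A i s t * B (m - i) (s + i) t)"

definition dadd :: "dop \<Rightarrow> dop \<Rightarrow> dop" where
  "dadd A B = (\<lambda>j s t. A j s t + B j s t)"

definition dsub :: "dop \<Rightarrow> dop \<Rightarrow> dop" where
  "dsub A B = (\<lambda>j s t. A j s t - B j s t)"

definition dcomm :: "dop \<Rightarrow> dop \<Rightarrow> dop" where
  "dcomm A B = dsub (dmul A B) (dmul B A)"

definition dunit :: dop where
  "dunit = (\<lambda>j s t. if j = 0 then 1 else 0)"

definition dshift :: dop where
  "dshift = (\<lambda>j s t. if j = 1 then 1 else 0)"

definition dfun :: "(int \<Rightarrow> (nat \<Rightarrow> real) \<Rightarrow> complex) \<Rightarrow> dop" where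
  "dfun f = (\<lambda>j s t. if j = 0 then f s t else 0)"

primrec dpow :: "dop \<Rightarrow> nat \<Rightarrow> dop" where
  "dpow A 0 = dunit"
| "dpow A (Suc n) = dmul (dpow A n) A"

definition dplus :: "dop \<Rightarrow> dop" where
  "dplus A = (\<lambda>j s t. if j \<ge> 0 then A j s t else 0)"

definition dzero :: "dop \<Rightarrow> dop" where
  "dzero A = (\<lambda>j s t. if j = 0 then A j s t else 0)"

definition dminus :: "dop \<Rightarrow> dop" where
  "dminus A = (\<lambda>j s t. if j < 0 then A j s t else 0)"

definition dscale :: "complex \<Rightarrow> dop \<Rightarrow> dop" where
  "dscale c A = (\<lambda>j s t. c * A j s t)"

definition Bop :: "complex \<Rightarrow> dop \<Rightarrow> nat \<Rightarrow> dop" where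
  "Bop \<alpha> L n = dsub (dplus (dpow L n)) (dscale \<alpha> (dzero (dpow L n)))"

definition Bcop :: "complex \<Rightarrow> dop \<Rightarrow> nat \<Rightarrow> dop" where
  "Bcop \<alpha> L n = dsub (dscale (-1) (dminus (dpow L n))) (dscale \<alpha> (dzero (dpow L n)))"

definition has_tderiv :: "dop \<Rightarrow> nat \<Rightarrow> dop \<Rightarrow> bool" where
  "has_tderiv A n D \<longleftrightarrow>
     (\<forall>j s t. ((\<lambda>x. A j s (t(n := x))) has_vector_derivative D j s t) (at (t n)))"

definition lax_form :: "dop \<Rightarrow> bool" where
  "lax_form L \<longleftrightarrow> (\<forall>j>1. \<forall>s t. L j s t = 0) \<and> (\<forall>s t. L 1 s t \<noteq> 0)"

definition cmKP_sol :: "complex \<Rightarrow> dop \<Rightarrow> bool" where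
  "cmKP_sol \<alpha> L \<longleftrightarrow> lax_form L \<and> (\<forall>n\<ge>1. has_tderiv L n (dcomm (Bop \<alpha> L n) L))"

end

theory Submission
  imports Defs
begin

text \<open>Conjugation by a multiplication operator e^h is multiplicative and fixes constant
  coefficients, so it carries (L^n)_{>=0} - alpha (L^n)_0 to the same expression in the
  conjugated operator, while differentiating e^h L e^{-h} in t_n adds the commutator with
  d h / d t_n. For h = (alpha - beta) phi, the constant coefficient of the dressing equation
  gives -alpha (d phi / d t_n) e^{-alpha phi} = -alpha (L^n)_0 e^{-alpha phi}, so this extra
  commutator is [(alpha - beta) (L^n)_0, e^h L e^{-h}] and shifts the gauge parameter from alpha
  to beta. Only the constant coefficient of W is used.\<close>

text \<open>The sum defining dmul is only finite, and dmul only bilinear, for operators whose shift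
  degrees are bounded above.\<close>
definition dop_degree_le :: "dop \<Rightarrow> int \<Rightarrow> bool" where
  "dop_degree_le A a \<longleftrightarrow> (\<forall>j>a. \<forall>s t. A j s t = 0)"

lemma dop_degree_le_mono: "dop_degree_le A a \<Longrightarrow> a \<le> b \<Longrightarrow> dop_degree_le A b"
  by (auto simp: dop_degree_le_def)

lemma dop_degree_le_dfun: "dop_degree_le (dfun h) 0"
  by (auto simp: dop_degree_le_def dfun_def)

lemma dmul_eq_sum:
  assumes "finite F" "\<And>i. i \<notin> F \<Longrightarrow> A i s t * B (m - i) (s + i) t = 0"
  shows "dmul A B m s t = (\<Sum>i\<in>F. A i s t * B (m - i) (s + i) t)"
proof -
  have "{i. A i s t \<noteq> 0 \<and> B (m - i) (s + i) t \<noteq> 0} \<subseteq> F"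
    using assms(2) by force
  then show ?thesis
    unfolding dmul_def by (rule sum.mono_neutral_left[OF assms(1)]) auto
qed

lemma dmul_eq_sum_degree_le:
  assumes "dop_degree_le A a" "dop_degree_le B b"
  shows "dmul A B m s t = (\<Sum>i\<in>{m-b..a}. A i s t * B (m - i) (s + i) t)"
  by (rule dmul_eq_sum) (use assms in \<open>auto simp: dop_degree_le_def\<close>)

lemma dop_degree_le_dmul:
  assumes "dop_degree_le A a" "dop_degree_le B b"
  shows "dop_degree_le (dmul A B) (a + b)"
  using dmul_eq_sum_degree_le[OF assms] by (simp add: dop_degree_le_def)

lemma dop_degree_le_dpow: "dop_degree_le L 1 \<Longrightarrow> dop_degree_le (dpow L n) (int n)"
proof (induction n)
  case 0
  then show ?case by (auto simp: dop_degree_le_def dunit_def)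
next
  case (Suc n)
  then show ?case using dop_degree_le_dmul[of "dpow L n" "int n" L 1] by (simp add: add.commute)
qed

lemma dop_degree_le_Bop: "dop_degree_le L 1 \<Longrightarrow> dop_degree_le (Bop \<alpha> L n) (int n)"
  using dop_degree_le_dpow[of L n]
  by (auto simp: dop_degree_le_def Bop_def dsub_def dplus_def dscale_def dzero_def)

lemma dmul_dadd_left:
  assumes "dop_degree_le A a" "dop_degree_le B a" "dop_degree_le C c"
  shows "dmul (dadd A B) C = dadd (dmul A C) (dmul B C)"
proof -
  have "dop_degree_le (dadd A B) a"
    using assms by (auto simp: dop_degree_le_def dadd_def)
  then show ?thesis
    using assms by (simp add: fun_eq_iff dmul_eq_sum_degree_le dadd_def distrib_right sum.distrib)
qed

lemma dmul_dadd_right: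
  assumes "dop_degree_le A a" "dop_degree_le B b" "dop_degree_le C b"
  shows "dmul A (dadd B C) = dadd (dmul A B) (dmul A C)"
proof -
  have "dop_degree_le (dadd B C) b"
    using assms by (auto simp: dop_degree_le_def dadd_def)
  then show ?thesis
    using assms by (simp add: fun_eq_iff dmul_eq_sum_degree_le dadd_def distrib_left sum.distrib)
qed

lemma dcomm_dadd_left:
  assumes "dop_degree_le X a" "dop_degree_le Y a" "dop_degree_le Z b"
  shows "dcomm (dadd X Y) Z = dadd (dcomm X Z) (dcomm Y Z)"
  unfolding dcomm_def dmul_dadd_left[OF assms] dmul_dadd_right[OF assms(3,1,2)]
  by (simp add: fun_eq_iff dsub_def dadd_def)

lemma dmul_dfun_left: "dmul (dfun h) A j s t = h s t * A j s t"
  by (subst dmul_eq_sum[where F="{0}"]) (auto simp: dfun_def)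

lemma dmul_dfun_right: "dmul A (dfun h) j s t = A j s t * h (s + j) t"
  by (subst dmul_eq_sum[where F="{j}"]) (auto simp: dfun_def)

definition dconj :: "(int \<Rightarrow> (nat \<Rightarrow> real) \<Rightarrow> complex) \<Rightarrow> dop \<Rightarrow> dop" where
  "dconj h A = (\<lambda>j s t. exp (h s t) * A j s t * exp (- h (s + j) t))"

lemma dconj_eq_dmul_dfun:
  "dconj h A = dmul (dmul (dfun (\<lambda>s t. exp (h s t))) A) (dfun (\<lambda>s t. exp (- h s t)))"
  by (simp add: fun_eq_iff dconj_def dmul_dfun_left dmul_dfun_right)

lemma dmul_dconj: "dmul (dconj h A) (dconj h B) = dconj h (dmul A B)"
proof (intro ext)
  fix m s t
  have support: "{i. dconj h A i s t \<noteq> 0 \<and> dconj h B (m - i) (s + i) t \<noteq> 0}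
      = {i. A i s t \<noteq> 0 \<and> B (m - i) (s + i) t \<noteq> 0}"
    by (auto simp: dconj_def)
  have summand: "dconj h A i s t * dconj h B (m - i) (s + i) t
      = exp (h s t) * (A i s t * B (m - i) (s + i) t) * exp (- h (s + m) t)" for i
  proof -
    have "dconj h A i s t * dconj h B (m - i) (s + i) t
        = exp (h s t) * (A i s t * B (m - i) (s + i) t) * exp (- h (s + m) t)
          * (exp (h (s + i) t) * exp (- h (s + i) t))"
      by (simp add: dconj_def algebra_simps)
    then show ?thesis by (simp only: exp_minus_inverse mult_1_right)
  qed
  show "dmul (dconj h A) (dconj h B) m s t = dconj h (dmul A B) m s t"
    unfolding dmul_def support summand
    by (simp add: dconj_def sum_distrib_left sum_distrib_right)
qed

lemma dpow_dconj: "dpow (dconj h A) n = dconj h (dpow A n)"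
proof (induction n)
  case 0
  show ?case by (simp add: fun_eq_iff dconj_def dunit_def exp_minus_inverse)
next
  case (Suc n)
  then show ?case by (simp add: dmul_dconj)
qed

lemma dcomm_dconj: "dcomm (dconj h A) (dconj h B) = dconj h (dcomm A B)"
  unfolding dcomm_def dmul_dconj by (simp add: fun_eq_iff dsub_def dconj_def algebra_simps)

lemma dop_degree_le_dconj: "dop_degree_le A a \<Longrightarrow> dop_degree_le (dconj h A) a"
  by (auto simp: dop_degree_le_def dconj_def)

lemma lax_form_dconj: "lax_form (dconj h L) \<longleftrightarrow> lax_form L"
  by (auto simp: lax_form_def dconj_def)

lemma dconj_apply_0: "dconj h A 0 s t = A 0 s t"
  by (simp add: dconj_def exp_minus field_simps)

lemma Bop_dconj:
  "Bop \<beta> (dconj h L) n = dadd (dconj h (Bop \<alpha> L n)) (dfun (\<lambda>s t. (\<alpha> - \<beta>) * dpow L n 0 s t))"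
proof (intro ext)
  fix j s t
  show "Bop \<beta> (dconj h L) n j s t
      = dadd (dconj h (Bop \<alpha> L n)) (dfun (\<lambda>s t. (\<alpha> - \<beta>) * dpow L n 0 s t)) j s t"
  proof (cases "j = 0")
    case True
    then show ?thesis
      unfolding Bop_def dpow_dconj
      by (simp add: dconj_apply_0 dsub_def dplus_def dscale_def dzero_def
          dadd_def dfun_def algebra_simps)
  next
    case False
    then show ?thesis
      unfolding Bop_def dpow_dconj
      by (simp add: dconj_def dsub_def dplus_def dscale_def dzero_def
          dadd_def dfun_def)
  qed
qed

lemma has_tderiv_dfun_iff:
  "has_tderiv (dfun h) n (dfun dh)
    \<longleftrightarrow> (\<forall>s t. ((\<lambda>x. h s (t(n := x))) has_vector_derivative dh s t) (at (t n)))"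
  by (auto simp: has_tderiv_def dfun_def)

lemma has_vector_derivative_exp:
  fixes f :: "real \<Rightarrow> 'a::{banach, real_normed_field}"
  assumes "(f has_vector_derivative f') (at x)"
  shows "((\<lambda>x. exp (f x)) has_vector_derivative f' * exp (f x)) (at x)"
  using field_vector_diff_chain_at[OF assms DERIV_exp] by (simp add: o_def)

lemma has_tderiv_dconj:
  assumes h: "has_tderiv (dfun h) n (dfun dh)" and A: "has_tderiv A n D"
  shows "has_tderiv (dconj h A) n (dadd (dconj h D) (dcomm (dfun dh) (dconj h A)))"
  unfolding has_tderiv_def
proof (intro allI)
  fix j s t
  have left: "((\<lambda>x. exp (h s (t(n := x)))) has_vector_derivative dh s t * exp (h s t)) (at (t n))"
    using has_vector_derivative_exp h by (fastforce simp: has_tderiv_dfun_iff)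
  have right: "((\<lambda>x. exp (- h (s + j) (t(n := x))))
      has_vector_derivative - dh (s + j) t * exp (- h (s + j) t)) (at (t n))"
    using has_vector_derivative_exp[OF has_vector_derivative_minus] h
    by (fastforce simp: has_tderiv_dfun_iff)
  have middle: "((\<lambda>x. A j s (t(n := x))) has_vector_derivative D j s t) (at (t n))"
    using A by (simp add: has_tderiv_def)
  from has_vector_derivative_mult[OF has_vector_derivative_mult[OF left middle] right]
  show "((\<lambda>x. dconj h A j s (t(n := x)))
      has_vector_derivative dadd (dconj h D) (dcomm (dfun dh) (dconj h A)) j s t) (at (t n))"
    by (simp add: dconj_def dadd_def dcomm_def dsub_def dmul_dfun_left dmul_dfun_right
        algebra_simps)
qed

lemma dressing_phase_tderiv:
  assumes "\<alpha> \<noteq> 0"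
    and "(\<lambda>x. \<phi> s (t(n := x))) differentiable (at (t n))"
    and W0: "\<forall>s t. W 0 s t = exp (- \<alpha> * \<phi> s t)"
    and W_lower: "\<forall>j>0. \<forall>s t. W j s t = 0"
    and W_deriv: "has_tderiv W n (dmul (Bcop \<alpha> L n) W)"
  shows "((\<lambda>x. \<phi> s (t(n := x))) has_vector_derivative dpow L n 0 s t) (at (t n))"
proof -
  obtain d where d: "((\<lambda>x. \<phi> s (t(n := x))) has_vector_derivative d) (at (t n))"
    using assms(2) vector_derivative_works by blast
  have "((\<lambda>x. W 0 s (t(n := x))) has_vector_derivative - \<alpha> * d * W 0 s t) (at (t n))"
    using has_vector_derivative_exp[OF has_vector_derivative_mult_right[OF d, of "- \<alpha>"]] W0
    by simp
  moreover have "dmul (Bcop \<alpha> L n) W 0 s t = - \<alpha> * dpow L n 0 s t * W 0 s t"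
    by (subst dmul_eq_sum[where F="{0}"])
      (use W_lower in \<open>auto simp: Bcop_def dsub_def dscale_def dminus_def dzero_def\<close>)
  then have "((\<lambda>x. W 0 s (t(n := x))) has_vector_derivative - \<alpha> * dpow L n 0 s t * W 0 s t)
      (at (t n))"
    using W_deriv by (metis has_tderiv_def)
  ultimately have "- \<alpha> * d * W 0 s t = - \<alpha> * dpow L n 0 s t * W 0 s t"
    by (rule vector_derivative_unique_at)
  then have "d = dpow L n 0 s t"
    using \<open>\<alpha> \<noteq> 0\<close> W0 by simp
  with d show ?thesis by simp
qed

lemma cmKP_sol_dconj:
  assumes sol: "cmKP_sol \<alpha> L"
    and h_flow: "\<And>n. n \<ge> 1 \<Longrightarrow> has_tderiv (dfun h) n (dfun (\<lambda>s t. (\<alpha> - \<beta>) * dpow L n 0 s t))"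
  shows "cmKP_sol \<beta> (dconj h L)"
proof -
  have lax: "lax_form L" and L_flow: "\<And>n. n \<ge> 1 \<Longrightarrow> has_tderiv L n (dcomm (Bop \<alpha> L n) L)"
    using sol by (auto simp: cmKP_sol_def)
  have L_degree: "dop_degree_le L 1"
    using lax by (auto simp: lax_form_def dop_degree_le_def)
  have "has_tderiv (dconj h L) n (dcomm (Bop \<beta> (dconj h L) n) (dconj h L))" if "n \<ge> 1" for n
  proof -
    define H where "H = dfun (\<lambda>s t. (\<alpha> - \<beta>) * dpow L n 0 s t)"
    have "dop_degree_le H (int n)" "dop_degree_le (dconj h (Bop \<alpha> L n)) (int n)"
      unfolding H_def
      by (auto intro: dop_degree_le_mono[OF dop_degree_le_dfun] dop_degree_le_dconj
          dop_degree_le_Bop[OF L_degree])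
    then have "dcomm (Bop \<beta> (dconj h L) n) (dconj h L)
        = dadd (dcomm (dconj h (Bop \<alpha> L n)) (dconj h L)) (dcomm H (dconj h L))"
      unfolding Bop_dconj[of \<beta> h L n \<alpha>] H_def[symmetric]
      using dcomm_dadd_left dop_degree_le_dconj[OF L_degree] by blast
    also have "\<dots> = dadd (dconj h (dcomm (Bop \<alpha> L n) L)) (dcomm H (dconj h L))"
      by (simp add: dcomm_dconj)
    finally show ?thesis
      using has_tderiv_dconj[OF h_flow[OF that] L_flow[OF that]] by (simp add: H_def)
  qed
  with lax show ?thesis
    by (simp add: cmKP_sol_def lax_form_dconj)
qed

theorem mainTheorem20:
  fixes \<alpha> \<beta> :: complex and L W :: dop and \<phi> :: "int \<Rightarrow> (nat \<Rightarrow> real) \<Rightarrow> complex"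
  assumes "\<alpha> \<noteq> 0"
    and "cmKP_sol \<alpha> L"
    and "\<forall>n\<ge>1. \<forall>s t. (\<lambda>x. \<phi> s (t(n := x))) differentiable (at (t n))"
    and "\<forall>s t. W 0 s t = exp (- \<alpha> * \<phi> s t)"
    and "\<forall>j>0. \<forall>s t. W j s t = 0"
    and "\<exists>V. dop_bounded V \<and> dmul W V = dunit \<and> dmul V W = dunit
              \<and> L = dmul (dmul W dshift) V"
    and "\<forall>n\<ge>1. has_tderiv W n (dmul (Bcop \<alpha> L n) W)"
  shows "cmKP_sol \<beta>
           (dmul (dmul (dfun (\<lambda>s t. exp ((\<alpha> - \<beta>) * \<phi> s t))) L)
                 (dfun (\<lambda>s t. exp (- (\<alpha> - \<beta>) * \<phi> s t))))"
proof -
  have "has_tderiv (dfun (\<lambda>s t. (\<alpha> - \<beta>) * \<phi> s t)) n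
      (dfun (\<lambda>s t. (\<alpha> - \<beta>) * dpow L n 0 s t))" if "n \<ge> 1" for n
    using dressing_phase_tderiv[OF assms(1) _ assms(4,5)] assms(3,7) that
    by (auto simp: has_tderiv_dfun_iff intro: has_vector_derivative_mult_right)
  then have "cmKP_sol \<beta> (dconj (\<lambda>s t. (\<alpha> - \<beta>) * \<phi> s t) L)"
    by (rule cmKP_sol_dconj[OF assms(2)])
  then show ?thesis
    by (simp only: dconj_eq_dmul_dfun mult_minus_left)
qed

end
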